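(* Let $m\ge n\ge1$, let $\boldsymbol{v}=(v_1,\dots,v_n)^T\in\mathbb{C}^n$ be a deterministic unit vector, let $\boldsymbol{H}\in\mathbb{C}^{m\times n}$ be a random partial Fourier/Hadamard matrix whose columns are sampled uniformly without replacement from the columns of the $m\times m$ DFT (resp. Hadamard) matrix, so that $\boldsymbol{H}^*\boldsymbol{H}=m\boldsymbol{I}_n$, and let $\boldsymbol{M}$ be an $n\times n$ diagonal matrix with i.i.d. diagonal entries uniform on $\{\pm1\}$, independent of $\boldsymbol{H}$. Set $\boldsymbol{A}=\boldsymbol{H}\boldsymbol{M}$ and $\boldsymbol{\Lambda}=\operatorname{diag}(\overline{\boldsymbol{A}\boldsymbol{v}})$. If $m\ge2$, then $$\mathbb{E}\big(\boldsymbol{\Lambda}\boldsymbol{A}(\boldsymbol{\Lambda}\boldsymbol{A})^*\big)=\frac{(n-1)(m\boldsymbol{I}_m-\boldsymbol 1_m\boldsymbol 1_m^* )}{m-1}+\boldsymbol 1_m\boldsymbol 1_m^*,$$ and if $m=n=1$, then $\mathbb{E}\big(\boldsymbol{\Lambda}\boldsymbol{A}(\boldsymbol{\Lambda}\boldsymbol{A})^*\big)=1$.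
   Context: The DFT and Hadamard matrices are unnormalized, with all entries of modulus $1$. $\overline{\cdot}$ denotes entrywise complex conjugation and $\boldsymbol 1_m$ the all-ones vector in $\mathbb{R}^m$. *)

theory Defs
  imports Complex_Main "HOL-Library.FuncSet"
begin

text \<open>Matrices of varying size are represented as functions nat => nat => complex,
  only entries with indices in range being meaningful.\<close>

definition dft_mat :: "nat \<Rightarrow> nat \<Rightarrow> nat \<Rightarrow> complex" where
  "dft_mat m j k = cis (- 2 * pi * real j * real k / real m)"

definition is_hadamard :: "nat \<Rightarrow> (nat \<Rightarrow> nat \<Rightarrow> complex) \<Rightarrow> bool" where
  "is_hadamard m F \<longleftrightarrow>
     (\<forall>i<m. \<forall>j<m. F i j = 1 \<or> F i j = -1) \<and>
     (\<forall>i<m. \<forall>j<m. (\<Sum>k<m. F k i * F k j) = (if i = j then of_nat m else 0))"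

text \<open>Ordered column selections: n columns out of m, sampled uniformly without replacement.\<close>
definition col_choices :: "nat \<Rightarrow> nat \<Rightarrow> (nat \<Rightarrow> nat) set" where
  "col_choices m n = {c \<in> {..<n} \<rightarrow>\<^sub>E {..<m}. inj_on c {..<n}}"

text \<open>Sign patterns: diagonal of M, i.i.d. uniform on {1,-1}.\<close>
definition sign_choices :: "nat \<Rightarrow> (nat \<Rightarrow> complex) set" where
  "sign_choices n = {..<n} \<rightarrow>\<^sub>E {1, -1}"

definition uavg :: "'a set \<Rightarrow> ('a \<Rightarrow> complex) \<Rightarrow> complex" where
  "uavg S f = (\<Sum>x\<in>S. f x) / of_nat (card S)"

text \<open>A = H M, where H i k = F i (c k) and M = diag(s).\<close>
definition A_mat :: "(nat \<Rightarrow> nat \<Rightarrow> complex) \<Rightarrow> (nat \<Rightarrow> nat) \<Rightarrow> (nat \<Rightarrow> complex)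
    \<Rightarrow> nat \<Rightarrow> nat \<Rightarrow> complex" where
  "A_mat F c s i k = F i (c k) * s k"

definition LA_mat :: "nat \<Rightarrow> (nat \<Rightarrow> nat \<Rightarrow> complex) \<Rightarrow> (nat \<Rightarrow> nat) \<Rightarrow> (nat \<Rightarrow> complex)
    \<Rightarrow> (nat \<Rightarrow> complex) \<Rightarrow> nat \<Rightarrow> nat \<Rightarrow> complex" where
  "LA_mat n F c s v i k = cnj (\<Sum>l<n. A_mat F c s i l * v l) * A_mat F c s i k"

definition LA_gram :: "nat \<Rightarrow> (nat \<Rightarrow> nat \<Rightarrow> complex) \<Rightarrow> (nat \<Rightarrow> nat) \<Rightarrow> (nat \<Rightarrow> complex)
    \<Rightarrow> (nat \<Rightarrow> complex) \<Rightarrow> nat \<Rightarrow> nat \<Rightarrow> complex" where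
  "LA_gram n F c s v i j = (\<Sum>k<n. LA_mat n F c s v i k * cnj (LA_mat n F c s v j k))"

definition expected_gram :: "nat \<Rightarrow> nat \<Rightarrow> (nat \<Rightarrow> nat \<Rightarrow> complex) \<Rightarrow> (nat \<Rightarrow> complex)
    \<Rightarrow> nat \<Rightarrow> nat \<Rightarrow> complex" where
  "expected_gram m n F v i j =
     uavg (col_choices m n \<times> sign_choices n) (\<lambda>(c, s). LA_gram n F c s v i j)"

end

theory Submission
  imports Defs "HOL-Combinatorics.Permutations" "Jordan_Normal_Form.Determinant"
begin

text \<open>Averaging over the signs first gives
  \<open>E\<^sub>s[cnj((Av)\<^sub>i) (Av)\<^sub>j] = \<Sum>\<^sub>l |v\<^sub>l|\<^sup>2 cnj(F\<^sub>i\<^sub>,\<^sub>c\<^sub>l) F\<^sub>j\<^sub>,\<^sub>c\<^sub>l\<close>, while the signs cancel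
  in \<open>(AA\<^sup>*)\<^sub>i\<^sub>j = \<Sum>\<^sub>k g(c\<^sub>k)\<close> with \<open>g(a) = F\<^sub>i\<^sub>a cnj(F\<^sub>j\<^sub>a)\<close>. The \<open>(i,j)\<close> entry is therefore
  \<open>\<Sum>\<^sub>l |v\<^sub>l|\<^sup>2 E\<^sub>c[cnj(g(c\<^sub>l)) \<Sum>\<^sub>k g(c\<^sub>k)]\<close>. The term \<open>k = l\<close> contributes \<open>|g|\<^sup>2 = 1\<close>; for
  \<open>k \<noteq> l\<close> the pair \<open>(c\<^sub>k, c\<^sub>l)\<close> is uniform on the off-diagonal pairs, which contributes
  \<open>(|\<Sum>\<^sub>a g(a)|\<^sup>2 - m) / (m(m-1))\<close>, and \<open>\<Sum>\<^sub>a g(a) = m \<delta>\<^sub>i\<^sub>j\<close> because the rows of \<open>F\<close> are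
  orthogonal.\<close>

lemma finite_col_choices: "finite (col_choices m n)"
  unfolding col_choices_def by (rule finite_subset[of _ "{..<n} \<rightarrow>\<^sub>E {..<m}"]) (auto intro: finite_PiE)

lemma col_choices_nonempty: "n \<le> m \<Longrightarrow> col_choices m n \<noteq> {}"
proof -
  assume "n \<le> m"
  then have "restrict id {..<n} \<in> col_choices m n"
    unfolding col_choices_def by (auto simp: inj_on_def)
  then show ?thesis by blast
qed

lemma col_choices_permute:
  assumes "p permutes {..<m}" "c \<in> col_choices m n"
  shows "restrict (p \<circ> c) {..<n} \<in> col_choices m n"
proof -
  have "inj_on (p \<circ> c) {..<n}"
    using assms by (auto simp: col_choices_def intro: comp_inj_on permutes_inj_on)
  then show ?thesis
    using assms permutes_in_image[OF assms(1)] by (auto simp: col_choices_def inj_on_def)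
qed

lemma card_col_choices_pinned_transpose:
  assumes "x < m" "y < m" "k < n" "l < n"
  shows "card {c \<in> col_choices m n. c k = a \<and> c l = b}
       = card {c \<in> col_choices m n. c k = transpose x y a \<and> c l = transpose x y b}"
proof (rule bij_betw_same_card[of "\<lambda>c. restrict (transpose x y \<circ> c) {..<n}"],
    rule bij_betw_byWitness[where f' = "\<lambda>c. restrict (transpose x y \<circ> c) {..<n}"])
  have t: "transpose x y permutes {..<m}" using assms by (intro permutes_swap_id) auto
  have involution: "restrict (transpose x y \<circ> restrict (transpose x y \<circ> c) {..<n}) {..<n} = c"
    if "c \<in> col_choices m n" for c
  proof -
    have "c \<in> extensional {..<n}" using that by (auto simp: col_choices_def PiE_def)
    then show ?thesis by (auto simp: extensional_def)
  qed
  then show "\<forall>c\<in>{c \<in> col_choices m n. c k = a \<and> c l = b}.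
      restrict (transpose x y \<circ> restrict (transpose x y \<circ> c) {..<n}) {..<n} = c"
    "\<forall>c\<in>{c \<in> col_choices m n. c k = transpose x y a \<and> c l = transpose x y b}.
      restrict (transpose x y \<circ> restrict (transpose x y \<circ> c) {..<n}) {..<n} = c"
    by auto
  show "(\<lambda>c. restrict (transpose x y \<circ> c) {..<n}) ` {c \<in> col_choices m n. c k = a \<and> c l = b}
      \<subseteq> {c \<in> col_choices m n. c k = transpose x y a \<and> c l = transpose x y b}"
    "(\<lambda>c. restrict (transpose x y \<circ> c) {..<n}) `
        {c \<in> col_choices m n. c k = transpose x y a \<and> c l = transpose x y b}
      \<subseteq> {c \<in> col_choices m n. c k = a \<and> c l = b}"
    using assms col_choices_permute[OF t] by auto
qed

lemma card_col_choices_pinned_eq: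
  assumes "a < m" "b < m" "a \<noteq> b" "a' < m" "b' < m" "a' \<noteq> b'" "k < n" "l < n"
  shows "card {c \<in> col_choices m n. c k = a \<and> c l = b}
       = card {c \<in> col_choices m n. c k = a' \<and> c l = b'}"
proof -
  define b1 where "b1 = transpose a a' b"
  have b1: "b1 < m" "b1 \<noteq> a'"
    using assms unfolding b1_def by (auto simp: transpose_def)
  have "card {c \<in> col_choices m n. c k = a \<and> c l = b}
      = card {c \<in> col_choices m n. c k = a' \<and> c l = b1}"
    using card_col_choices_pinned_transpose[of a m a' k n l a b] assms by (simp add: b1_def)
  also have "\<dots> = card {c \<in> col_choices m n. c k = a' \<and> c l = b'}"
    using card_col_choices_pinned_transpose[of b1 m b' k n l a' b1] assms b1 by simp
  finally show ?thesis .
qed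

definition off_diagonal :: "nat \<Rightarrow> (nat \<times> nat) set" where
  "off_diagonal m = {(a, b). a < m \<and> b < m \<and> a \<noteq> b}"

lemma finite_off_diagonal: "finite (off_diagonal m)"
  unfolding off_diagonal_def by (rule finite_subset[of _ "{..<m} \<times> {..<m}"]) auto

lemma card_off_diagonal: "card (off_diagonal m) = m * m - m"
proof -
  have "off_diagonal m = {..<m} \<times> {..<m} - (\<lambda>a. (a, a)) ` {..<m}"
    unfolding off_diagonal_def by auto
  moreover have "card ((\<lambda>a. (a, a)) ` {..<m}) = m"
    by (simp add: card_image inj_on_def)
  ultimately show ?thesis
    by (simp add: card_Diff_subset card_cartesian_product image_subset_iff)
qed

lemma sum_col_choices_pair:
  assumes "k < n" "l < n" "k \<noteq> l" "n \<le> m"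
  shows "(\<Sum>c\<in>col_choices m n. f (c k) (c l) :: complex) =
    of_nat (card (col_choices m n)) / (of_nat m * (of_nat m - 1))
      * (\<Sum>(a, b) \<in> off_diagonal m. f a b)"
proof -
  let ?C = "col_choices m n" and ?T = "off_diagonal m"
  have m2: "2 \<le> m" using assms by auto
  define N where "N = card {c \<in> ?C. c k = 0 \<and> c l = 1}"
  have maps: "(\<lambda>c. (c k, c l)) ` ?C \<subseteq> ?T"
    using assms by (auto simp: off_diagonal_def col_choices_def inj_on_def)
  have pair: "(\<Sum>c\<in>?C. g (c k) (c l)) = of_nat N * (\<Sum>(a, b)\<in>?T. g a b)"
    for g :: "nat \<Rightarrow> nat \<Rightarrow> complex"
  proof -
    have "(\<Sum>c\<in>?C. g (c k) (c l)) = (\<Sum>y\<in>?T. \<Sum>c\<in>{c \<in> ?C. (c k, c l) = y}. g (c k) (c l))"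
      by (rule sum.group[OF finite_col_choices finite_off_diagonal maps, symmetric])
    also have "\<dots> = (\<Sum>(a, b)\<in>?T. of_nat N * g a b)"
    proof (rule sum.cong[OF refl], clarify, unfold off_diagonal_def, clarify)
      fix a b assume ab: "a < m" "b < m" "a \<noteq> b"
      have "(\<Sum>c\<in>{c \<in> ?C. (c k, c l) = (a, b)}. g (c k) (c l))
          = (\<Sum>c\<in>{c \<in> ?C. c k = a \<and> c l = b}. g a b)"
        by (intro sum.cong) auto
      also have "\<dots> = of_nat N * g a b"
        unfolding N_def using card_col_choices_pinned_eq[of a m b 0 1 k n l] ab assms m2 by simp
      finally show "(\<Sum>c\<in>{c \<in> ?C. (c k, c l) = (a, b)}. g (c k) (c l)) = of_nat N * g a b" .
    qed
    finally show ?thesis by (simp add: sum_distrib_left case_prod_unfold)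
  qed
  have "of_nat (card ?C) = of_nat N * (of_nat m * (of_nat m - 1) :: complex)"
    using pair[of "\<lambda>_ _. 1"] card_off_diagonal[of m] m2 by (simp add: algebra_simps)
  moreover have "(of_nat m * (of_nat m - 1) :: complex) \<noteq> 0" using m2 by simp
  ultimately show ?thesis by (simp add: pair)
qed

lemma finite_sign_choices: "finite (sign_choices n)"
  unfolding sign_choices_def by (auto intro: finite_PiE)

lemma card_sign_choices_nonzero: "card (sign_choices n) \<noteq> 0"
proof -
  have "(\<lambda>k\<in>{..<n}. 1) \<in> sign_choices n" unfolding sign_choices_def by auto
  then show ?thesis using finite_sign_choices[of n] by auto
qed

lemma sign_choices_cases: "s \<in> sign_choices n \<Longrightarrow> k < n \<Longrightarrow> s k = 1 \<or> s k = -1"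
  unfolding sign_choices_def by auto

lemma sign_choices_cnj: "s \<in> sign_choices n \<Longrightarrow> k < n \<Longrightarrow> cnj (s k) = s k"
  using sign_choices_cases by fastforce

lemma sign_choices_square: "s \<in> sign_choices n \<Longrightarrow> k < n \<Longrightarrow> s k * s k = 1"
  using sign_choices_cases by fastforce

lemma sum_sign_choices_mult:
  assumes "l < n" "l' < n"
  shows "(\<Sum>s\<in>sign_choices n. s l * s l') = (if l = l' then of_nat (card (sign_choices n)) else 0)"
proof (cases "l = l'")
  case True
  have "(\<Sum>s\<in>sign_choices n. s l * s l) = (\<Sum>s\<in>sign_choices n. 1)"
    using assms sign_choices_square by (intro sum.cong) auto
  then show ?thesis using True by simp
next
  case False
  let ?S = "sign_choices n"
  let ?flip = "\<lambda>s. s(l := - s l)"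
  have "?flip s \<in> ?S" if "s \<in> ?S" for s
    using that assms unfolding sign_choices_def by (auto simp: PiE_def Pi_def extensional_def)
  then have "(\<Sum>s\<in>?S. s l * s l') = (\<Sum>s\<in>?S. ?flip s l * ?flip s l')"
    by (intro sum.reindex_bij_witness[of _ ?flip ?flip]) auto
  also have "\<dots> = - (\<Sum>s\<in>?S. s l * s l')" using False by (simp add: sum_negf)
  finally show ?thesis using False by simp
qed

lemma sum_sign_choices_quadratic:
  fixes x y :: "nat \<Rightarrow> complex"
  shows
  "(\<Sum>s\<in>sign_choices n. cnj (\<Sum>l<n. s l * x l) * (\<Sum>l<n. s l * y l))
     = of_nat (card (sign_choices n)) * (\<Sum>l<n. cnj (x l) * y l)"
proof -
  have "(\<Sum>s\<in>sign_choices n. cnj (\<Sum>l<n. s l * x l) * (\<Sum>l<n. s l * y l))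
      = (\<Sum>l<n. \<Sum>l'<n. cnj (x l) * y l' * (\<Sum>s\<in>sign_choices n. s l * s l'))"
    by (simp add: cnj_sum sum_product sum_distrib_left sign_choices_cnj sum.swap[of _ "sign_choices n"] mult_ac)
  also have "\<dots> = (\<Sum>l<n. \<Sum>l'<n. if l' = l then of_nat (card (sign_choices n)) * (cnj (x l) * y l') else 0)"
    by (intro sum.cong refl) (simp add: sum_sign_choices_mult)
  also have "\<dots> = (\<Sum>l<n. of_nat (card (sign_choices n)) * (cnj (x l) * y l))"
    by simp
  finally show ?thesis by (simp add: sum_distrib_left)
qed

lemma LA_gram_sign_choice:
  assumes s: "s \<in> sign_choices n"
  shows "LA_gram n F c s v i j =
    cnj (\<Sum>l<n. s l * (F i (c l) * v l)) * (\<Sum>l<n. s l * (F j (c l) * v l))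
      * (\<Sum>k<n. F i (c k) * cnj (F j (c k)))"
proof -
  let ?Av = "\<lambda>i'. \<Sum>l<n. A_mat F c s i' l * v l"
  have Av: "?Av i' = (\<Sum>l<n. s l * (F i' (c l) * v l))" for i'
    by (simp add: A_mat_def mult_ac)
  have "LA_gram n F c s v i j = (\<Sum>k<n. cnj (?Av i) * ?Av j * (A_mat F c s i k * cnj (A_mat F c s j k)))"
    unfolding LA_gram_def LA_mat_def by (intro sum.cong refl) (simp add: mult_ac)
  also have "\<dots> = (\<Sum>k<n. cnj (?Av i) * ?Av j * (F i (c k) * cnj (F j (c k))))"
    using sign_choices_cnj[OF s] sign_choices_square[OF s]
    by (intro sum.cong refl) (simp add: A_mat_def mult_ac)
  finally show ?thesis by (simp add: Av sum_distrib_left)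
qed

lemma sum_sign_choices_LA_gram:
  "(\<Sum>s\<in>sign_choices n. LA_gram n F c s v i j) = of_nat (card (sign_choices n)) *
    (\<Sum>l<n. of_real ((cmod (v l))\<^sup>2) * cnj (F i (c l)) * F j (c l))
      * (\<Sum>k<n. F i (c k) * cnj (F j (c k)))"
proof -
  have "(\<Sum>s\<in>sign_choices n. LA_gram n F c s v i j)
      = (\<Sum>s\<in>sign_choices n. cnj (\<Sum>l<n. s l * (F i (c l) * v l)) * (\<Sum>l<n. s l * (F j (c l) * v l)))
          * (\<Sum>k<n. F i (c k) * cnj (F j (c k)))"
    by (simp add: LA_gram_sign_choice sum_distrib_right cong: sum.cong)
  also have "\<dots> = of_nat (card (sign_choices n)) * (\<Sum>l<n. cnj (F i (c l) * v l) * (F j (c l) * v l))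
          * (\<Sum>k<n. F i (c k) * cnj (F j (c k)))"
    by (simp only: sum_sign_choices_quadratic)
  also have "(\<Sum>l<n. cnj (F i (c l) * v l) * (F j (c l) * v l))
      = (\<Sum>l<n. of_real ((cmod (v l))\<^sup>2) * cnj (F i (c l)) * F j (c l))"
    by (intro sum.cong refl) (simp add: mult_ac flip: complex_norm_square)
  finally show ?thesis .
qed

lemma sum_offdiagonal_mult_cnj:
  fixes g :: "nat \<Rightarrow> complex"
  shows "(\<Sum>(a, b)\<in>off_diagonal m. g a * cnj (g b))
       = (\<Sum>a<m. g a) * cnj (\<Sum>a<m. g a) - (\<Sum>a<m. g a * cnj (g a))"
proof -
  have "off_diagonal m = (SIGMA a:{..<m}. {..<m} - {a})" unfolding off_diagonal_def by auto
  then have "(\<Sum>(a, b)\<in>off_diagonal m. g a * cnj (g b))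
      = (\<Sum>a<m. \<Sum>b\<in>{..<m} - {a}. g a * cnj (g b))"
    by (simp add: sum.Sigma)
  also have "\<dots> = (\<Sum>a<m. g a * cnj (\<Sum>b<m. g b) - g a * cnj (g a))"
    by (intro sum.cong refl) (simp add: sum_diff1 cnj_sum sum_distrib_left)
  finally show ?thesis by (simp add: sum_subtractf sum_distrib_right)
qed

lemma sum_col_choices_cnj_mult_sum:
  fixes g :: "nat \<Rightarrow> complex"
  assumes "n \<le> m" "l < n" and g: "\<And>a. a < m \<Longrightarrow> g a * cnj (g a) = 1"
  shows "(\<Sum>c\<in>col_choices m n. cnj (g (c l)) * (\<Sum>k<n. g (c k)))
       = of_nat (card (col_choices m n)) * (1 + of_nat (n - 1)
           * ((\<Sum>a<m. g a) * cnj (\<Sum>a<m. g a) - of_nat m) / (of_nat m * (of_nat m - 1)))"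
proof -
  let ?C = "col_choices m n"
  define D where "D = (\<Sum>a<m. g a) * cnj (\<Sum>a<m. g a) - of_nat m"
  have diag: "(\<Sum>c\<in>?C. g (c l) * cnj (g (c l))) = of_nat (card ?C)"
    using assms by (simp add: g col_choices_def PiE_def Pi_def)
  have offdiag: "(\<Sum>c\<in>?C. g (c k) * cnj (g (c l))) = of_nat (card ?C) * D / (of_nat m * (of_nat m - 1))"
    if "k \<in> {..<n} - {l}" for k
    using that assms
    by (simp add: sum_col_choices_pair[where f = "\<lambda>a b. g a * cnj (g b)"] sum_offdiagonal_mult_cnj g D_def)
  have "(\<Sum>c\<in>?C. cnj (g (c l)) * (\<Sum>k<n. g (c k))) = (\<Sum>k<n. \<Sum>c\<in>?C. g (c k) * cnj (g (c l)))"
    by (simp add: sum_distrib_left sum.swap[of _ ?C] mult_ac)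
  also have "\<dots> = (\<Sum>c\<in>?C. g (c l) * cnj (g (c l))) + (\<Sum>k\<in>{..<n} - {l}. \<Sum>c\<in>?C. g (c k) * cnj (g (c l)))"
    using assms(2) by (simp add: sum.remove)
  also have "\<dots> = of_nat (card ?C) + of_nat (n - 1) * (of_nat (card ?C) * D / (of_nat m * (of_nat m - 1)))"
    using assms(2) by (simp add: diag offdiag)
  finally show ?thesis unfolding D_def by (simp add: algebra_simps)
qed

definition flat_orthogonal :: "nat \<Rightarrow> (nat \<Rightarrow> nat \<Rightarrow> complex) \<Rightarrow> bool" where
  "flat_orthogonal m F \<longleftrightarrow>
     (\<forall>i<m. \<forall>a<m. F i a * cnj (F i a) = 1) \<and>
     (\<forall>i<m. \<forall>j<m. (\<Sum>a<m. F i a * cnj (F j a)) = (if i = j then of_nat m else 0))"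

lemma expected_gram_flat_orthogonal:
  assumes F: "flat_orthogonal m F" and "n \<le> m" and v: "(\<Sum>k<n. (cmod (v k))\<^sup>2) = 1"
    and "i < m" "j < m"
  shows "expected_gram m n F v i j
       = 1 + of_nat (n - 1) * ((if i = j then of_nat m * of_nat m else 0) - of_nat m)
               / (of_nat m * (of_nat m - 1))"
proof -
  let ?C = "col_choices m n" and ?S = "sign_choices n"
  define g where "g a = F i a * cnj (F j a)" for a
  define K where "K = 1 + of_nat (n - 1) * ((if i = j then of_nat m * of_nat m else 0) - of_nat m)
               / (of_nat m * (of_nat m - 1 :: complex))"
  have "g a * cnj (g a) = (F i a * cnj (F i a)) * (F j a * cnj (F j a))" for a
    by (simp add: g_def mult_ac)
  then have "g a * cnj (g a) = 1" if "a < m" for a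
    using F assms(4,5) that unfolding flat_orthogonal_def by simp
  moreover have "(\<Sum>a<m. g a) * cnj (\<Sum>a<m. g a) = (if i = j then of_nat m * of_nat m else 0)"
    using F assms(4,5) unfolding flat_orthogonal_def g_def by simp
  ultimately have col: "(\<Sum>c\<in>?C. cnj (g (c l)) * (\<Sum>k<n. g (c k))) = of_nat (card ?C) * K"
    if "l < n" for l
    using sum_col_choices_cnj_mult_sum[OF assms(2) that] unfolding K_def by simp
  have "(\<Sum>c\<in>?C. \<Sum>s\<in>?S. LA_gram n F c s v i j)
      = of_nat (card ?S) * (\<Sum>l<n. of_real ((cmod (v l))\<^sup>2) * (\<Sum>c\<in>?C. cnj (g (c l)) * (\<Sum>k<n. g (c k))))"
    by (simp add: sum_sign_choices_LA_gram g_def sum_distrib_left sum_distrib_right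
        sum.swap[of _ ?C] mult_ac)
  also have "\<dots> = of_nat (card ?S) * (\<Sum>l<n. of_real ((cmod (v l))\<^sup>2) * (of_nat (card ?C) * K))"
    by (simp add: col)
  also have "\<dots> = of_nat (card ?S) * of_nat (card ?C) * K * of_real (\<Sum>l<n. (cmod (v l))\<^sup>2)"
    by (simp add: sum_distrib_left sum_distrib_right mult_ac)
  finally have "(\<Sum>c\<in>?C. \<Sum>s\<in>?S. LA_gram n F c s v i j) = of_nat (card ?S) * of_nat (card ?C) * K"
    using v by simp
  moreover have "card ?C \<noteq> 0"
    using col_choices_nonempty[OF assms(2)] finite_col_choices by auto
  ultimately show ?thesis
    using card_sign_choices_nonzero[of n]
    by (simp add: expected_gram_def uavg_def K_def sum.cartesian_product[symmetric] card_cartesian_product)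
qed

lemma cis_fraction_ne_1:
  assumes "d \<noteq> 0" "\<bar>d\<bar> < int m"
  shows "cis (2 * pi * of_int d / real m) \<noteq> 1"
proof
  assume "cis (2 * pi * of_int d / real m) = 1"
  then have "cos (2 * pi * of_int d / real m) = 1"
    by (metis cis.sel(1) one_complex.simps(1))
  then obtain k :: int where "2 * pi * of_int d / real m = of_int k * 2 * pi"
    unfolding cos_one_2pi_int by blast
  moreover have "m > 0" using assms by auto
  ultimately have "d = k * int m"
    by (simp add: field_simps) (metis of_int_eq_iff of_int_mult of_int_of_nat_eq)
  with assms show False
    by (cases "k = 0") (auto simp: abs_mult dest: mult_le_cancel_right1[THEN iffD2, of _ "int m"])
qed

lemma dft_mat_mult_cnj:
  assumes "m > 0"
  shows "dft_mat m i a * cnj (dft_mat m j a) = cis (2 * pi * of_int (int j - int i) / real m) ^ a"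
proof -
  have "dft_mat m i a * cnj (dft_mat m j a)
      = cis (- 2 * pi * real i * real a / real m + 2 * pi * real j * real a / real m)"
    unfolding dft_mat_def by (simp add: cis_cnj cis_mult)
  also have "- 2 * pi * real i * real a / real m + 2 * pi * real j * real a / real m
      = real a * (2 * pi * of_int (int j - int i) / real m)"
    using assms by (simp add: field_simps)
  finally show ?thesis by (simp add: DeMoivre)
qed

lemma dft_mat_flat_orthogonal: "flat_orthogonal m (dft_mat m)"
  unfolding flat_orthogonal_def
proof (intro conjI allI impI)
  fix i a show "dft_mat m i a * cnj (dft_mat m i a) = 1"
    unfolding dft_mat_def by (simp add: cis_cnj cis_mult)
next
  fix i j assume ij: "i < m" "j < m"
  define w where "w = cis (2 * pi * of_int (int j - int i) / real m)"
  have "(\<Sum>a<m. dft_mat m i a * cnj (dft_mat m j a)) = (\<Sum>a<m. w ^ a)"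
    using ij by (simp add: dft_mat_mult_cnj w_def)
  also have "\<dots> = (if i = j then of_nat m else 0)"
  proof (cases "i = j")
    case False
    have "w ^ m = cis (2 * pi * of_int (int j - int i))"
      using ij by (simp add: w_def DeMoivre)
    then have "w ^ m = 1" by simp
    moreover have "w \<noteq> 1"
      unfolding w_def using False ij by (intro cis_fraction_ne_1) auto
    ultimately show ?thesis using False by (simp add: geometric_sum)
  qed (simp add: w_def)
  finally show "(\<Sum>a<m. dft_mat m i a * cnj (dft_mat m j a)) = (if i = j then of_nat m else 0)" .
qed

text \<open>The definition of a Hadamard matrix asks for orthogonal columns; the rows are orthogonal
  as well because a one-sided inverse of a square matrix is two-sided.\<close>

lemma hadamard_rows_orthogonal:
  assumes H: "is_hadamard m F" and ij: "i < m" "j < m"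
  shows "(\<Sum>a<m. F i a * F j a) = (if i = j then of_nat m else 0)"
proof -
  define Q where "Q = mat m m (\<lambda>(i, j). F i j)"
  define P where "P = (1 / of_nat m) \<cdot>\<^sub>m transpose_mat Q"
  have m0: "m > 0" using ij by auto
  have Q: "Q \<in> carrier_mat m m" and P: "P \<in> carrier_mat m m"
    unfolding Q_def P_def by simp_all
  have QTQ: "transpose_mat Q * Q = of_nat m \<cdot>\<^sub>m 1\<^sub>m m"
  proof (rule eq_matI)
    fix a b assume "a < dim_row (of_nat m \<cdot>\<^sub>m 1\<^sub>m m :: complex mat)"
      "b < dim_col (of_nat m \<cdot>\<^sub>m 1\<^sub>m m :: complex mat)"
    then show "(transpose_mat Q * Q) $$ (a, b) = (of_nat m \<cdot>\<^sub>m 1\<^sub>m m) $$ (a, b)"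
      using H unfolding is_hadamard_def Q_def
      by (auto simp: scalar_prod_def row_def col_def atLeast0LessThan)
  qed (auto simp: Q_def)
  have "P * Q = (1 / of_nat m) \<cdot>\<^sub>m (transpose_mat Q * Q)"
    unfolding P_def using Q by (simp add: mult_smult_assoc_mat)
  also have "\<dots> = 1\<^sub>m m" unfolding QTQ using m0 by (intro eq_matI) auto
  finally have "Q * P = 1\<^sub>m m" using mat_mult_left_right_inverse[OF P Q] by simp
  moreover have "(Q * P) $$ (i, j) = (1 / of_nat m) * (\<Sum>a<m. F i a * F j a)"
    using ij unfolding P_def Q_def
    by (simp add: scalar_prod_def row_def col_def sum_distrib_left mult_ac atLeast0LessThan)
  ultimately show ?thesis using ij m0 by (auto simp: field_simps split: if_splits)
qed

lemma hadamard_flat_orthogonal: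
  assumes H: "is_hadamard m F"
  shows "flat_orthogonal m F"
proof -
  have pm: "F i a = 1 \<or> F i a = -1" if "i < m" "a < m" for i a
    using H that unfolding is_hadamard_def by blast
  have "(\<Sum>a<m. F i a * cnj (F j a)) = (\<Sum>a<m. F i a * F j a)" if "j < m" for i j
    using pm[OF that] by (intro sum.cong refl) fastforce
  moreover have "F i a * cnj (F i a) = 1" if "i < m" "a < m" for i a
    using pm[OF that] by fastforce
  ultimately show ?thesis
    unfolding flat_orthogonal_def using hadamard_rows_orthogonal[OF H] by simp
qed

theorem lemma5p8:
  fixes m n :: nat and v :: "nat \<Rightarrow> complex" and F :: "nat \<Rightarrow> nat \<Rightarrow> complex"
  assumes "1 \<le> n" and "n \<le> m"
    and "(\<Sum>k<n. (cmod (v k))\<^sup>2) = 1"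
    and "F = dft_mat m \<or> is_hadamard m F"
  shows "(2 \<le> m \<longrightarrow> (\<forall>i<m. \<forall>j<m. expected_gram m n F v i j =
            of_nat (n - 1) * (of_nat m * (if i = j then 1 else 0) - 1) / of_nat (m - 1) + 1))
       \<and> (m = 1 \<and> n = 1 \<longrightarrow> expected_gram m n F v 0 0 = 1)"
proof -
  have "flat_orthogonal m F"
    using assms(4) dft_mat_flat_orthogonal hadamard_flat_orthogonal by blast
  note gram = expected_gram_flat_orthogonal[OF this assms(2,3)]
  show ?thesis
  proof (intro conjI impI allI)
    fix i j assume m2: "2 \<le> m" and ij: "i < m" "j < m"
    then have "of_nat (m - 1) = (of_nat m - 1 :: complex)" "(of_nat m - 1 :: complex) \<noteq> 0"
      by (auto simp: of_nat_diff)
    with m2 show "expected_gram m n F v i j =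
            of_nat (n - 1) * (of_nat m * (if i = j then 1 else 0) - 1) / of_nat (m - 1) + 1"
      unfolding gram[OF ij] by (simp add: field_simps)
  next
    assume "m = 1 \<and> n = 1"
    then show "expected_gram m n F v 0 0 = 1" using gram[of 0 0] by simp
  qed
qed

end
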